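(* Consider Algorithm iR2N (described in the context) and suppose (A1), (A2), (A3), (A4), (A6), (A7) hold. Let $\epsilon>0$, $k_\epsilon=\min\{k\in\mathbb{N}\mid \nu_k^{-1}\|\hat s_{k,\mathrm{cp}}\|<\epsilon\}$, $\mathcal{S}(\epsilon)=\{k\in\mathbb{N}\mid\hat\rho_k\ge\hat\eta_1,\ k<k_\epsilon\}$ and $\mathcal{U}(\epsilon)=\{k\in\mathbb{N}\mid\hat\rho_k<\hat\eta_1,\ k<k_\epsilon\}$. Then $$|\mathcal{S}(\epsilon)|+|\mathcal{U}(\epsilon)|\le\big(1+|\log_{\gamma_1}(\gamma_3)|\big)\,\omega_s\,\epsilon^{-2}+\log_{\gamma_1}(\sigma_{\max}/\sigma_0)=O(\epsilon^{-2}),$$ where $\omega_s=\dfrac{(f+h)(x_0)-(f+h)_{\mathrm{low}}}{\tfrac12\eta_1(1-\theta_1)\nu_{\min}}$. In particular $k_\epsilon=|\mathcal{S}(\epsilon)|+|\mathcal{U}(\epsilon)|+1$ is finite.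
   Context: Setting. $f:\mathbb{R}^n\to\mathbb{R}$ is continuously differentiable, $h:\mathbb{R}^n\to\mathbb{R}\cup\{+\infty\}$ is proper and lower semicontinuous; the problem is $\min_x f(x)+h(x)$. $\|\cdot\|$ is the Euclidean norm (spectral norm for matrices). For each $x$, approximations $\hat f(x)\in\mathbb{R}$ of $f(x)$ and $\hat\nabla f(x)\in\mathbb{R}^n$ of $\nabla f(x)$ are available. For each $x$, $\psi(\cdot;x):\mathbb{R}^n\to\mathbb{R}\cup\{+\infty\}$ is proper, lsc, satisfies $\psi(0;x)=h(x)$ and $\partial\psi(0;x)\subseteq\partial h(x)$ ($\partial$ = limiting subdifferential), and is uniformly prox-bounded: there is $\lambda>0$ such that for every $x$ and every $0<\lambda'<\lambda$, $w\mapsto\psi(w;x)+\tfrac{1}{2\lambda'}\|w\|^2$ is bounded below. Models: $\varphi_{\mathrm{cp}}(s;x)=\hat f(x)+\hat\nabla f(x)^Ts$; $m_{\mathrm{cp}}(s;x,\nu^{-1})=\varphi_{\mathrm{cp}}(s;x)+\tfrac12\nu^{-1}\|s\|^2+\psi(s;x)$; for a symmetric $B(x)\in\mathbb{R}^{n\times n}$, $\varphi(s;x)=\hat f(x)+\hat\nabla f(x)^Ts+\tfrac12 s^TB(x)s$ and $m(s;x,\sigma)=\varphi(s;x)+\tfrac12\sigma\|s\|^2+\psi(s;x)$. Algorithm iR2N. Constants: $\kappa_f,\kappa_\nabla>0$, $0<\gamma_3\le 1<\gamma_1\le\gamma_2$, $0<\hat\eta_1\le\hat\eta_2<1$, $0<\theta_1<1<\theta_2$,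 $\sigma_{\min}>4\kappa_f\theta_1\theta_2^2/(\hat\eta_1(1-\theta_1))$, $\sigma_0\ge\sigma_{\min}$, $x_0\in\mathbb{R}^n$. At iteration $k=0,1,\dots$: choose symmetric $B_k=B(x_k)$; set $\nu_k=\theta_1/(\|B_k\|+\sigma_k)$; compute $\hat s_{k,\mathrm{cp}}$ with $m_{\mathrm{cp}}(\hat s_{k,\mathrm{cp}};x_k,\nu_k^{-1})\le m_{\mathrm{cp}}(0;x_k,\nu_k^{-1})$ (an approximate minimizer of $m_{\mathrm{cp}}(\cdot;x_k,\nu_k^{-1})$ obtained by a descent procedure from $s=0$) and set $\hat\xi_{k,\mathrm{cp}}=(\varphi_{\mathrm{cp}}+\psi)(0;x_k)-(\varphi_{\mathrm{cp}}+\psi)(\hat s_{k,\mathrm{cp}};x_k)$; compute $s_k$ with $m(s_k;x_k,\sigma_k)\le m(\hat s_{k,\mathrm{cp}};x_k,\sigma_k)$; if $\|s_k\|>\theta_2\|\hat s_{k,\mathrm{cp}}\|$, reset $s_k=\hat s_{k,\mathrm{cp}}$ (these computations are repeated with refined $\hat f,\hat\nabla f$ until (A6) holds). Compute $$\hat\rho_k=\frac{\hat f(x_k)+h(x_k)-\hat f(x_k+s_k)-h(x_k+s_k)}{\varphi(0;x_k)+\psi(0;x_k)-\varphi(s_k;x_k)-\psi(s_k;x_k)},$$ where $\varphi(\cdot;x_k)$ uses $B_k$. If $\hat\rho_k\ge\hat\eta_1$ (successful) set $x_{k+1}=x_k+s_k$, else $x_{k+1}=x_k$. Choose $\sigma_{k+1}\in[\gamma_3\sigma_k,\sigma_k]$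 if $\hat\rho_k\ge\hat\eta_2$ (very successful), $\sigma_{k+1}\in[\sigma_k,\gamma_1\sigma_k]$ if $\hat\eta_1\le\hat\rho_k<\hat\eta_2$, $\sigma_{k+1}\in[\gamma_1\sigma_k,\gamma_2\sigma_k]$ if $\hat\rho_k<\hat\eta_1$; then reset $\sigma_{k+1}=\max(\sigma_{k+1},\sigma_{\min})$. Assumptions. (A1) $|f(x+s)-f(x)-\nabla f(x)^Ts|\le\tfrac12L\|s\|^2$ for all $x,s$, for some $L\ge0$. (A2) $\|B_k\|\le\kappa_B$ for all $k$, for some $\kappa_B>0$. (A3) $|\psi(s;x)-h(x+s)|\le\kappa_h\|s\|^2$ for all $x,s$, for some $\kappa_h>0$. (A4) For all $k$, $\varphi(0;x_k)+\psi(0;x_k)-(\varphi(s_k;x_k)+\psi(s_k;x_k))\ge(1-\theta_1)\hat\xi_{k,\mathrm{cp}}$. (A6) For all $k$: $|f(x_k)-\hat f(x_k)|\le\kappa_f\|s_k\|^2$, $|f(x_k+s_k)-\hat f(x_k+s_k)|\le\kappa_f\|s_k\|^2$, $\|\nabla f(x_k)-\hat\nabla f(x_k)\|\le\kappa_\nabla\|s_k\|$. (A7) There is $(f+h)_{\mathrm{low}}\in\mathbb{R}$ with $(f+h)(x)\ge(f+h)_{\mathrm{low}}$ for all $x$. Constants: $\eta_1=\hat\eta_1-4\kappa_f\theta_1\theta_2^2/((1-\theta_1)\sigma_{\min})$; $\sigma_{\mathrm{succ}}=\max\big(\theta_1\theta_2^2(L+\kappa_B+2\kappa_h+4\kappa_f+2\kappa_\nabla)/((1-\theta_1)(1-\hat\eta_2)),\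 \lambda^{-1}\big)$; $\sigma_{\max}=\max(\sigma_0,\gamma_2\sigma_{\mathrm{succ}})$ (an upper bound on all $\sigma_k$); $\nu_{\min}=\theta_1/(\kappa_B+\sigma_{\max})$. *)

theory Defs
  imports "HOL-Analysis.Analysis"
begin

definition proper_fun :: "('a \<Rightarrow> ereal) \<Rightarrow> bool" where
  "proper_fun F \<longleftrightarrow> (\<forall>x. F x \<noteq> -\<infinity>) \<and> (\<exists>x. F x \<noteq> \<infinity>)"

definition lsc_fun :: "('a::topological_space \<Rightarrow> ereal) \<Rightarrow> bool" where
  "lsc_fun F \<longleftrightarrow> (\<forall>x. F x \<le> Liminf (at x) F)"

text \<open>Regular subgradient: \<open>F x\<close> finite and
  \<open>liminf_{y \<rightarrow> x} (F y - F x - v\<bullet>(y-x)) / \<parallel>y-x\<parallel> \<ge> 0\<close>, written out with epsilons.\<close>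
definition frechet_subdiff :: "('a::real_inner \<Rightarrow> ereal) \<Rightarrow> 'a \<Rightarrow> 'a set" where
  "frechet_subdiff F x = {v. \<bar>F x\<bar> \<noteq> \<infinity> \<and>
      (\<forall>e>0. \<forall>\<^sub>F y in at x. ereal (real_of_ereal (F x) + v \<bullet> (y - x) - e * norm (y - x)) \<le> F y)}"

definition limiting_subdiff :: "('a::real_inner \<Rightarrow> ereal) \<Rightarrow> 'a \<Rightarrow> 'a set" where
  "limiting_subdiff F x = {v. \<exists>xs vs. xs \<longlonglongrightarrow> x \<and> (\<lambda>j. F (xs j)) \<longlonglongrightarrow> F x \<and>
      (\<forall>j. vs j \<in> frechet_subdiff F (xs j)) \<and> vs \<longlonglongrightarrow> v}"

definition spec_norm :: "real^'n^'n \<Rightarrow> real" where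
  "spec_norm M = onorm (\<lambda>v. M *v v)"

definition phi_cp :: "real \<Rightarrow> real^'n \<Rightarrow> real^'n \<Rightarrow> real" where
  "phi_cp fh g s = fh + g \<bullet> s"

definition phi_q :: "real \<Rightarrow> real^'n \<Rightarrow> real^'n^'n \<Rightarrow> real^'n \<Rightarrow> real" where
  "phi_q fh g M s = fh + g \<bullet> s + (1/2) * (s \<bullet> (M *v s))"

end

theory Submission
  imports Defs
begin

(* While \<nu>_k^-1 |s_cp,k| \<ge> \<epsilon>, the model decrease is at least (1 - \<theta>_1)/2 \<nu>_k^-1 |s_cp,k|^2,
   whereas the inexact values of f and of its gradient, the Taylor remainder, B_k and the model
   \<psi> of h move the numerator of \<rho>_k away from it by only O(|s_k|^2) = O(|s_cp,k|^2). Hence every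
   successful iteration decreases f + h by at least \<eta>_1 (1 - \<theta>_1) \<nu>_min \<epsilon>^2 / 2, which bounds |S|
   by \<omega>_s \<epsilon>^-2; and every iteration with \<sigma>_k \<ge> \<sigma>_succ is very successful, so \<sigma>_k never
   exceeds \<sigma>_max. As unsuccessful iterations multiply \<sigma>_k by at least \<gamma>_1 and successful ones
   by at least \<gamma>_3, the inequality \<sigma>_0 \<gamma>_1^|U| \<gamma>_3^|S| \<le> \<sigma>_max bounds |U| in terms of |S|. *)

lemma card_Collect_less_Suc:
  "card {k. P k \<and> k < Suc n} = card {k. P k \<and> k < n} + (if P n then 1 else 0)"
proof -
  have "{k. P k \<and> k < Suc n} = (if P n then insert n {k. P k \<and> k < n} else {k. P k \<and> k < n})"
    by (auto simp: less_Suc_eq)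
  then show ?thesis by simp
qed

lemma card_Collect_less_partition:
  "card {k. P k \<and> k < n} + card {k. \<not> P k \<and> k < n} = n"
  by (induction n) (simp_all add: card_Collect_less_Suc)

lemma decrease_by_count:
  fixes F :: "nat \<Rightarrow> real"
  assumes "\<And>k. k < n \<Longrightarrow> P k \<Longrightarrow> F (Suc k) \<le> F k - \<delta>"
    and "\<And>k. k < n \<Longrightarrow> \<not> P k \<Longrightarrow> F (Suc k) \<le> F k"
  shows "F n \<le> F 0 - \<delta> * card {k. P k \<and> k < n}"
  using assms
proof (induction n)
  case (Suc n)
  then have "F n \<le> F 0 - \<delta> * card {k. P k \<and> k < n}" by simp
  with Suc.prems[of n] show ?case by (auto simp: card_Collect_less_Suc algebra_simps)
qed simp

lemma growth_by_count:
  fixes \<sigma> :: "nat \<Rightarrow> real"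
  assumes "0 \<le> a" "0 \<le> b"
    and "\<And>k. P k \<Longrightarrow> a * \<sigma> k \<le> \<sigma> (Suc k)"
    and "\<And>k. \<not> P k \<Longrightarrow> b * \<sigma> k \<le> \<sigma> (Suc k)"
  shows "\<sigma> 0 * a ^ card {k. P k \<and> k < n} * b ^ card {k. \<not> P k \<and> k < n} \<le> \<sigma> n"
proof (induction n)
  case (Suc n)
  show ?case
  proof (cases "P n")
    case True
    have "a * (\<sigma> 0 * a ^ card {k. P k \<and> k < n} * b ^ card {k. \<not> P k \<and> k < n}) \<le> a * \<sigma> n"
      using Suc.IH assms(1) by (rule mult_left_mono)
    also have "\<dots> \<le> \<sigma> (Suc n)" using assms(3) True .
    finally show ?thesis using True by (simp add: card_Collect_less_Suc mult_ac)
  next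
    case False
    have "b * (\<sigma> 0 * a ^ card {k. P k \<and> k < n} * b ^ card {k. \<not> P k \<and> k < n}) \<le> b * \<sigma> n"
      using Suc.IH assms(2) by (rule mult_left_mono)
    also have "\<dots> \<le> \<sigma> (Suc n)" using assms(4) False .
    finally show ?thesis using False by (simp add: card_Collect_less_Suc mult_ac)
  qed
qed simp

lemma exponent_le_log:
  fixes a b c M :: real
  assumes "1 < b" "0 < a" "a \<le> 1" "0 < c" and bound: "c * b ^ u * a ^ m \<le> M"
  shows "real u \<le> log b (M / c) + real m * \<bar>log b a\<bar>"
proof -
  have pos: "0 < c * b ^ u * a ^ m" using assms by simp
  then have "0 < M" using bound by linarith
  have "log b (c * b ^ u * a ^ m) \<le> log b M"
    using assms pos by (intro log_mono) auto
  moreover have "log b (c * b ^ u * a ^ m) = log b c + u + m * log b a"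
    using assms by (simp add: log_mult log_nat_power)
  moreover have "log b (M / c) = log b M - log b c"
    using assms \<open>0 < M\<close> by (simp add: log_divide)
  moreover have "real m * \<bar>log b a\<bar> = - (real m * log b a)"
    using assms by (simp add: log_le_zero_cancel_iff)
  ultimately show ?thesis by linarith
qed

lemma spec_norm_nonneg: "0 \<le> spec_norm M"
  unfolding spec_norm_def by (rule onorm_pos_le) simp

lemma quadratic_form_le_spec_norm: "\<bar>v \<bullet> (M *v v)\<bar> \<le> spec_norm M * norm v ^ 2"
proof -
  have "\<bar>v \<bullet> (M *v v)\<bar> \<le> norm v * norm (M *v v)" by (rule Cauchy_Schwarz_ineq2)
  also have "\<dots> \<le> norm v * (spec_norm M * norm v)"
    unfolding spec_norm_def by (intro mult_left_mono onorm) simp_all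
  finally show ?thesis by (simp add: power2_eq_square mult_ac)
qed

(* Only the hypotheses of the theorem that the count uses. Any \<sigma>_succ above the threshold at which
   every iteration is very successful will do. *)
locale iR2N =
  fixes f :: "real^'n \<Rightarrow> real" and gradf :: "real^'n \<Rightarrow> real^'n"
    and h :: "real^'n \<Rightarrow> ereal"
    and psi :: "real^'n \<Rightarrow> real^'n \<Rightarrow> ereal"
    and B :: "real^'n \<Rightarrow> real^'n^'n"
    and kappa_f kappa_g kappa_B kappa_h L fh_low :: real
    and gamma1 gamma2 gamma3 eta1h eta2h theta1 theta2 sigma_min sigma_succ :: real
    and x :: "nat \<Rightarrow> real^'n" and sigma nu fx fxs :: "nat \<Rightarrow> real"
    and g scp s :: "nat \<Rightarrow> real^'n" and xi_cp rho :: "nat \<Rightarrow> ereal"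
  assumes h_proper: "proper_fun h" and psi_proper: "\<And>y. proper_fun (psi y)"
    and psi_zero: "\<And>y. psi y 0 = h y"
    and kappa_f_pos: "kappa_f > 0" and kappa_g_pos: "kappa_g > 0"
    and gammas: "0 < gamma3" "gamma3 \<le> 1" "1 < gamma1" "gamma1 \<le> gamma2"
    and etas: "0 < eta1h" "eta1h \<le> eta2h" "eta2h < 1"
    and thetas: "0 < theta1" "theta1 < 1" "1 < theta2"
    and sigma_min_large: "sigma_min > 4 * kappa_f * theta1 * theta2 ^ 2 / (eta1h * (1 - theta1))"
    and sigma0: "sigma 0 \<ge> sigma_min"
    and sigma_succ_large: "theta1 * theta2 ^ 2 * (L + kappa_B + 2 * kappa_h + 4 * kappa_f + 2 * kappa_g)
                       / ((1 - theta1) * (1 - eta2h)) \<le> sigma_succ"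
    and nu_def: "\<And>k. nu k = theta1 / (spec_norm (B (x k)) + sigma k)"
    and cp_decrease: "\<And>k. ereal (phi_cp (fx k) (g k) (scp k) + (1/2) * (1 / nu k) * norm (scp k) ^ 2)
                            + psi (x k) (scp k)
                          \<le> ereal (phi_cp (fx k) (g k) 0 + (1/2) * (1 / nu k) * norm (0::real^'n) ^ 2)
                            + psi (x k) 0"
    and xi_cp_def: "\<And>k. xi_cp k = (ereal (phi_cp (fx k) (g k) 0) + psi (x k) 0)
                                 - (ereal (phi_cp (fx k) (g k) (scp k)) + psi (x k) (scp k))"
    and step: "\<And>k. \<exists>t. ereal (phi_q (fx k) (g k) (B (x k)) t + (1/2) * sigma k * norm t ^ 2) + psi (x k) t
                         \<le> ereal (phi_q (fx k) (g k) (B (x k)) (scp k) + (1/2) * sigma k * norm (scp k) ^ 2)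
                            + psi (x k) (scp k)
                     \<and> s k = (if norm t > theta2 * norm (scp k) then scp k else t)"
    and rho_def: "\<And>k. rho k =
          ((ereal (fx k) + h (x k)) - (ereal (fxs k) + h (x k + s k)))
          / ((ereal (phi_q (fx k) (g k) (B (x k)) 0) + psi (x k) 0)
             - (ereal (phi_q (fx k) (g k) (B (x k)) (s k)) + psi (x k) (s k)))"
    and x_update: "\<And>k. x (Suc k) = (if rho k \<ge> ereal eta1h then x k + s k else x k)"
    and sigma_update: "\<And>k. \<exists>sig. (rho k \<ge> ereal eta2h \<longrightarrow> gamma3 * sigma k \<le> sig \<and> sig \<le> sigma k)
              \<and> (ereal eta1h \<le> rho k \<and> rho k < ereal eta2h \<longrightarrow> sigma k \<le> sig \<and> sig \<le> gamma1 * sigma k)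
              \<and> (rho k < ereal eta1h \<longrightarrow> gamma1 * sigma k \<le> sig \<and> sig \<le> gamma2 * sigma k)
              \<and> sigma (Suc k) = max sig sigma_min"
    and x0_dom: "h (x 0) \<noteq> \<infinity>"
    and taylor_bound: "L \<ge> 0" "\<And>y t. \<bar>f (y + t) - f y - gradf y \<bullet> t\<bar> \<le> (1/2) * L * norm t ^ 2"
    and hessian_bound: "kappa_B > 0" "\<And>k. spec_norm (B (x k)) \<le> kappa_B"
    and psi_approx: "kappa_h > 0"
        "\<And>y t. psi y t \<le> h (y + t) + ereal (kappa_h * norm t ^ 2)"
        "\<And>y t. h (y + t) \<le> psi y t + ereal (kappa_h * norm t ^ 2)"
    and cauchy_fraction: "\<And>k. (ereal (phi_q (fx k) (g k) (B (x k)) 0) + psi (x k) 0)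
                  - (ereal (phi_q (fx k) (g k) (B (x k)) (s k)) + psi (x k) (s k))
                \<ge> ereal (1 - theta1) * xi_cp k"
    and inexact: "\<And>k. \<bar>f (x k) - fx k\<bar> \<le> kappa_f * norm (s k) ^ 2"
        "\<And>k. \<bar>f (x k + s k) - fxs k\<bar> \<le> kappa_f * norm (s k) ^ 2"
        "\<And>k. norm (gradf (x k) - g k) \<le> kappa_g * norm (s k)"
    and bounded_below: "\<And>y. ereal (f y) + h y \<ge> ereal fh_low"
begin

definition eta1 :: real where
  "eta1 = eta1h - 4 * kappa_f * theta1 * theta2 ^ 2 / ((1 - theta1) * sigma_min)"

definition error_const :: real where
  "error_const = L + kappa_B + 2 * kappa_h + 4 * kappa_f + 2 * kappa_g"

definition sigma_max :: real where
  "sigma_max = max (sigma 0) (gamma2 * sigma_succ)"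

definition nu_min :: real where
  "nu_min = theta1 / (kappa_B + sigma_max)"

lemma sigma_min_pos: "sigma_min > 0"
proof -
  have "4 * kappa_f * theta1 * theta2 ^ 2 / (eta1h * (1 - theta1)) > 0"
    using kappa_f_pos thetas etas by (intro divide_pos_pos mult_pos_pos) auto
  then show ?thesis using sigma_min_large by linarith
qed

lemma eta1_pos: "eta1 > 0"
proof -
  have "4 * kappa_f * theta1 * theta2 ^ 2 < sigma_min * (eta1h * (1 - theta1))"
    using sigma_min_large etas thetas by (simp add: pos_divide_less_eq)
  then have "4 * kappa_f * theta1 * theta2 ^ 2 / ((1 - theta1) * sigma_min) < eta1h"
    using sigma_min_pos thetas by (simp add: divide_less_eq mult_ac)
  then show ?thesis unfolding eta1_def by simp
qed

lemma error_const_nonneg: "error_const \<ge> 0"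
  unfolding error_const_def using taylor_bound hessian_bound psi_approx kappa_f_pos kappa_g_pos by simp

lemma sigma_ge_sigma_min: "sigma k \<ge> sigma_min"
proof (cases k)
  case (Suc j)
  then show ?thesis using sigma_update[of j] by auto
qed (use sigma0 in simp)

lemma sigma_pos: "sigma k > 0"
  using sigma_ge_sigma_min[of k] sigma_min_pos by linarith

lemma inverse_nu: "1 / nu k = (spec_norm (B (x k)) + sigma k) / theta1"
  using nu_def[of k] by simp

lemma nu_pos: "nu k > 0"
  using nu_def[of k] spec_norm_nonneg[of "B (x k)"] sigma_pos[of k] thetas by simp

lemma inverse_nu_ge_sigma: "sigma k / theta1 \<le> 1 / nu k"
  unfolding inverse_nu using spec_norm_nonneg[of "B (x k)"] thetas by (simp add: divide_right_mono)

lemma nu_min_le_nu: "sigma k \<le> sigma_max \<Longrightarrow> nu_min \<le> nu k"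
  unfolding nu_min_def nu_def using hessian_bound(2)[of k] spec_norm_nonneg[of "B (x k)"]
    sigma_pos[of k] thetas
  by (intro divide_left_mono) auto

lemma step_norm_le: "norm (s k) \<le> theta2 * norm (scp k)"
proof -
  obtain t where "s k = (if norm t > theta2 * norm (scp k) then scp k else t)"
    using step[of k] by blast
  moreover have "norm (scp k) \<le> theta2 * norm (scp k)"
    using thetas by (simp add: mult_le_cancel_right1)
  ultimately show ?thesis by (auto split: if_splits)
qed

lemma step_norm_sq_le: "norm (s k) ^ 2 \<le> theta2 ^ 2 * norm (scp k) ^ 2"
  using power_mono[OF step_norm_le[of k], of 2] by (simp add: power_mult_distrib)

lemma h_not_minf: "h y \<noteq> -\<infinity>"
  using h_proper unfolding proper_fun_def by blast

lemma psi_not_minf: "psi y t \<noteq> -\<infinity>"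
  using psi_proper unfolding proper_fun_def by blast

lemma step_values_finite:
  assumes "\<bar>h (x k)\<bar> \<noteq> \<infinity>"
  shows "\<bar>psi (x k) (scp k)\<bar> \<noteq> \<infinity>" "\<bar>psi (x k) (s k)\<bar> \<noteq> \<infinity>" "\<bar>h (x k + s k)\<bar> \<noteq> \<infinity>"
proof -
  have psi_scp: "psi (x k) (scp k) \<noteq> \<infinity>"
    using cp_decrease[of k] psi_zero[of "x k"] assms by auto
  obtain t where t_decrease:
      "ereal (phi_q (fx k) (g k) (B (x k)) t + (1/2) * sigma k * norm t ^ 2) + psi (x k) t
       \<le> ereal (phi_q (fx k) (g k) (B (x k)) (scp k) + (1/2) * sigma k * norm (scp k) ^ 2)
          + psi (x k) (scp k)"
    and s_eq: "s k = (if norm t > theta2 * norm (scp k) then scp k else t)"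
    using step[of k] by blast
  have "psi (x k) t \<noteq> \<infinity>"
    using t_decrease psi_scp psi_not_minf[of "x k" "scp k"] by (cases "psi (x k) (scp k)") auto
  then have psi_s: "psi (x k) (s k) \<noteq> \<infinity>"
    using s_eq psi_scp by simp
  then have "h (x k + s k) \<noteq> \<infinity>"
    using psi_approx(3)[of "x k" "s k"] by auto
  then show "\<bar>psi (x k) (scp k)\<bar> \<noteq> \<infinity>" "\<bar>psi (x k) (s k)\<bar> \<noteq> \<infinity>" "\<bar>h (x k + s k)\<bar> \<noteq> \<infinity>"
    using psi_scp psi_s psi_not_minf h_not_minf by auto
qed

lemma h_iterate_finite: "\<bar>h (x k)\<bar> \<noteq> \<infinity>"
proof (induction k)
  case 0
  show ?case using x0_dom h_not_minf[of "x 0"] by auto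
next
  case (Suc k)
  then show ?case using step_values_finite(3)[of k] x_update[of k] by auto
qed

lemmas step_finite = step_values_finite[OF h_iterate_finite]

(* The values of h and psi met along the run are finite (h_iterate_finite, step_finite), so
   real_of_ereal loses nothing in the following definitions. *)
definition objective :: "real^'n \<Rightarrow> real" where
  "objective y = f y + real_of_ereal (h y)"

definition omega_s :: real where
  "omega_s = (objective (x 0) - fh_low) / ((1/2) * eta1 * (1 - theta1) * nu_min)"

definition cauchy_decrease :: "nat \<Rightarrow> real" where
  "cauchy_decrease k = phi_cp (fx k) (g k) 0 + real_of_ereal (psi (x k) 0)
     - (phi_cp (fx k) (g k) (scp k) + real_of_ereal (psi (x k) (scp k)))"

definition model_decrease :: "nat \<Rightarrow> real" where
  "model_decrease k = phi_q (fx k) (g k) (B (x k)) 0 + real_of_ereal (psi (x k) 0)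
     - (phi_q (fx k) (g k) (B (x k)) (s k) + real_of_ereal (psi (x k) (s k)))"

definition estimated_decrease :: "nat \<Rightarrow> real" where
  "estimated_decrease k = fx k + real_of_ereal (h (x k)) - (fxs k + real_of_ereal (h (x k + s k)))"

lemma xi_cp_eq: "xi_cp k = ereal (cauchy_decrease k)"
proof -
  obtain hx pc where "h (x k) = ereal hx" "psi (x k) (scp k) = ereal pc"
    using h_iterate_finite[of k] step_finite(1)[of k] by force
  then show ?thesis
    using xi_cp_def[of k] psi_zero[of "x k"] by (simp add: cauchy_decrease_def)
qed

lemma rho_eq: "rho k = ereal (estimated_decrease k) / ereal (model_decrease k)"
proof -
  obtain hx hs ps where "h (x k) = ereal hx" "h (x k + s k) = ereal hs" "psi (x k) (s k) = ereal ps"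
    using h_iterate_finite[of k] step_finite(2,3)[of k] by force
  then show ?thesis
    using rho_def[of k] psi_zero[of "x k"] by (simp add: model_decrease_def estimated_decrease_def)
qed

lemma cauchy_decrease_ge: "(1/2) * (1 / nu k) * norm (scp k) ^ 2 \<le> cauchy_decrease k"
proof -
  obtain hx pc where "h (x k) = ereal hx" "psi (x k) (scp k) = ereal pc"
    using h_iterate_finite[of k] step_finite(1)[of k] by force
  then show ?thesis
    using cp_decrease[of k] psi_zero[of "x k"] by (simp add: cauchy_decrease_def phi_cp_def)
qed

lemma model_decrease_ge_cauchy: "(1 - theta1) * cauchy_decrease k \<le> model_decrease k"
proof -
  obtain hx ps where "h (x k) = ereal hx" "psi (x k) (s k) = ereal ps"
    using h_iterate_finite[of k] step_finite(2)[of k] by force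
  then show ?thesis
    using cauchy_fraction[of k] xi_cp_eq[of k] psi_zero[of "x k"] by (simp add: model_decrease_def)
qed

lemma model_decrease_ge: "(1 - theta1) / 2 * (1 / nu k) * norm (scp k) ^ 2 \<le> model_decrease k"
  using mult_left_mono[OF cauchy_decrease_ge[of k], of "1 - theta1"] model_decrease_ge_cauchy[of k] thetas
  by simp

lemma estimated_model_gap:
  "\<bar>estimated_decrease k - model_decrease k\<bar> \<le> (1/2) * error_const * norm (s k) ^ 2"
proof -
  obtain hs ps where hs: "h (x k + s k) = ereal hs" and ps: "psi (x k) (s k) = ereal ps"
    using step_finite(2,3)[of k] by force
  have gradient_error: "\<bar>(gradf (x k) - g k) \<bullet> s k\<bar> \<le> kappa_g * norm (s k) ^ 2"
  proof -
    have "\<bar>(gradf (x k) - g k) \<bullet> s k\<bar> \<le> norm (gradf (x k) - g k) * norm (s k)"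
      by (rule Cauchy_Schwarz_ineq2)
    also have "\<dots> \<le> kappa_g * norm (s k) * norm (s k)"
      using inexact(3)[of k] by (simp add: mult_right_mono)
    finally show ?thesis by (simp add: power2_eq_square mult_ac)
  qed
  have hessian_term: "\<bar>s k \<bullet> (B (x k) *v s k)\<bar> \<le> kappa_B * norm (s k) ^ 2"
    using quadratic_form_le_spec_norm[of "s k" "B (x k)"] hessian_bound(2)[of k]
    by (meson mult_right_mono order_trans zero_le_power2)
  have psi_error: "\<bar>ps - hs\<bar> \<le> kappa_h * norm (s k) ^ 2"
    using psi_approx(2,3)[of "x k" "s k"] ps hs by simp
  have "estimated_decrease k - model_decrease k
      = (fx k - f (x k)) + (f (x k + s k) - fxs k) - (f (x k + s k) - f (x k) - gradf (x k) \<bullet> s k)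
        - (gradf (x k) - g k) \<bullet> s k + (1/2) * (s k \<bullet> (B (x k) *v s k)) + (ps - hs)"
    using hs ps psi_zero[of "x k"]
    by (simp add: estimated_decrease_def model_decrease_def phi_q_def inner_diff_left)
  then show ?thesis
    using inexact(1,2)[of k] taylor_bound(2)[of "x k" "s k"] gradient_error hessian_term psi_error
    unfolding error_const_def abs_le_iff by (simp add: algebra_simps)
qed

lemma objective_decrease_ge:
  "estimated_decrease k - 2 * kappa_f * norm (s k) ^ 2 \<le> objective (x k) - objective (x k + s k)"
  using inexact(1,2)[of k]
  unfolding estimated_decrease_def objective_def abs_le_iff by simp

lemma model_decrease_pos: "scp k \<noteq> 0 \<Longrightarrow> 0 < model_decrease k"
  using model_decrease_ge[of k] nu_pos[of k] thetas
  by (smt (verit) divide_pos_pos mult_pos_pos zero_less_norm_iff zero_less_power)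

lemma very_successful:
  assumes "scp k \<noteq> 0" and "sigma_succ \<le> sigma k"
  shows "ereal eta2h \<le> rho k"
proof -
  have "theta1 * theta2 ^ 2 * error_const / ((1 - theta1) * (1 - eta2h)) \<le> sigma k"
    using sigma_succ_large assms(2) unfolding error_const_def by linarith
  then have "theta1 * (theta2 ^ 2 * error_const) \<le> (1 - eta2h) * (1 - theta1) * sigma k"
    using thetas etas by (simp add: pos_divide_le_eq mult_ac)
  then have "theta2 ^ 2 * error_const \<le> (1 - eta2h) * (1 - theta1) * (sigma k / theta1)"
    using thetas by (simp add: pos_le_divide_eq mult_ac)
  also have "\<dots> \<le> (1 - eta2h) * (1 - theta1) * (1 / nu k)"
    using inverse_nu_ge_sigma[of k] thetas etas by (intro mult_left_mono) auto
  finally have threshold: "theta2 ^ 2 * error_const \<le> (1 - eta2h) * (1 - theta1) * (1 / nu k)" .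
  have "\<bar>estimated_decrease k - model_decrease k\<bar> \<le> (1/2) * error_const * (theta2 ^ 2 * norm (scp k) ^ 2)"
    using estimated_model_gap[of k] step_norm_sq_le[of k] error_const_nonneg
    by (meson mult_left_mono order_trans mult_nonneg_nonneg zero_le_divide_iff zero_le_one zero_le_numeral)
  also have "\<dots> \<le> (1/2) * ((1 - eta2h) * (1 - theta1) * (1 / nu k)) * norm (scp k) ^ 2"
    using mult_right_mono[OF threshold, of "norm (scp k) ^ 2"] by (simp add: mult_ac)
  also have "\<dots> \<le> (1 - eta2h) * model_decrease k"
    using mult_left_mono[OF model_decrease_ge[of k], of "1 - eta2h"] etas by (simp add: mult_ac)
  finally have "eta2h * model_decrease k \<le> estimated_decrease k"
    unfolding abs_le_iff by (simp add: algebra_simps)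
  then show ?thesis
    using model_decrease_pos[OF assms(1)] by (simp add: rho_eq pos_le_divide_eq)
qed

lemma model_decrease_ge_sigma_min:
  "(1 - theta1) / 2 * (sigma_min / theta1) * norm (scp k) ^ 2 \<le> model_decrease k"
proof -
  have "sigma_min / theta1 \<le> 1 / nu k"
    using inverse_nu_ge_sigma[of k] sigma_ge_sigma_min[of k] thetas
    by (meson divide_right_mono less_imp_le order_trans)
  then have "(1 - theta1) / 2 * (sigma_min / theta1) * norm (scp k) ^ 2
      \<le> (1 - theta1) / 2 * (1 / nu k) * norm (scp k) ^ 2"
    using thetas by (intro mult_right_mono mult_left_mono) auto
  then show ?thesis
    using model_decrease_ge[of k] by linarith
qed

lemma successful_decrease:
  assumes "scp k \<noteq> 0" and "ereal eta1h \<le> rho k"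
  shows "eta1 * model_decrease k \<le> objective (x k) - objective (x k + s k)"
proof -
  have "eta1h * model_decrease k \<le> estimated_decrease k"
    using assms model_decrease_pos[OF assms(1)] by (simp add: rho_eq pos_le_divide_eq)
  moreover have "2 * kappa_f * norm (s k) ^ 2 \<le> (eta1h - eta1) * model_decrease k"
  proof -
    have "2 * kappa_f * norm (s k) ^ 2 \<le> 2 * kappa_f * (theta2 ^ 2 * norm (scp k) ^ 2)"
      using step_norm_sq_le[of k] kappa_f_pos by simp
    also have "\<dots> = (eta1h - eta1) * ((1 - theta1) / 2 * (sigma_min / theta1) * norm (scp k) ^ 2)"
      unfolding eta1_def using thetas sigma_min_pos by (simp add: field_simps)
    also have "\<dots> \<le> (eta1h - eta1) * model_decrease k"
      using model_decrease_ge_sigma_min[of k] eta1_pos unfolding eta1_def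
      by (intro mult_left_mono) (auto intro!: divide_nonneg_nonneg mult_nonneg_nonneg simp: kappa_f_pos thetas sigma_min_pos less_imp_le)
    finally show ?thesis .
  qed
  ultimately show ?thesis
    using objective_decrease_ge[of k] by (simp add: algebra_simps)
qed

lemma sigma_Suc_success: "ereal eta1h \<le> rho k \<Longrightarrow> gamma3 * sigma k \<le> sigma (Suc k)"
proof -
  assume "ereal eta1h \<le> rho k"
  moreover have "gamma3 * sigma k \<le> sigma k"
    using gammas sigma_pos[of k] by (simp add: mult_le_cancel_right1)
  ultimately show ?thesis
    using sigma_update[of k] by (cases "rho k < ereal eta2h") (auto simp: not_less)
qed

lemma sigma_Suc_failure: "rho k < ereal eta1h \<Longrightarrow> gamma1 * sigma k \<le> sigma (Suc k)"
  using sigma_update[of k] by auto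

lemma sigma_Suc_very_success: "ereal eta2h \<le> rho k \<Longrightarrow> sigma (Suc k) \<le> sigma k"
  using sigma_update[of k] sigma_ge_sigma_min[of k] by auto

lemma sigma_Suc_le: "sigma (Suc k) \<le> max (gamma2 * sigma k) sigma_min"
proof -
  have "sigma k \<le> gamma1 * sigma k" "gamma1 * sigma k \<le> gamma2 * sigma k"
    using sigma_pos[of k] gammas by (auto intro: mult_right_mono)
  then show ?thesis
    using sigma_update[of k]
    by (cases "rho k < ereal eta1h"; cases "rho k < ereal eta2h") (auto simp: not_less)
qed

lemma sigma_le_sigma_max: "(\<And>k. k < n \<Longrightarrow> scp k \<noteq> 0) \<Longrightarrow> sigma n \<le> sigma_max"
proof (induction n)
  case 0
  show ?case unfolding sigma_max_def by simp
next
  case (Suc n)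
  then have IH: "sigma n \<le> sigma_max" by simp
  show ?case
  proof (cases "sigma_succ \<le> sigma n")
    case True
    then show ?thesis
      using very_successful[of n] sigma_Suc_very_success[of n] Suc.prems IH by force
  next
    case False
    then have "gamma2 * sigma n \<le> gamma2 * sigma_succ"
      using gammas by simp
    moreover have "sigma_min \<le> sigma_max"
      using sigma0 unfolding sigma_max_def by simp
    ultimately show ?thesis
      using sigma_Suc_le[of n] unfolding sigma_max_def by auto
  qed
qed

lemma nu_min_pos: "nu_min > 0"
  unfolding nu_min_def sigma_max_def using thetas hessian_bound(1) sigma_pos[of 0] by simp

lemma objective_ge_low: "fh_low \<le> objective (x k)"
proof -
  obtain hx where "h (x k) = ereal hx" using h_iterate_finite[of k] by force
  then show ?thesis using bounded_below[of "x k"] unfolding objective_def by simp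
qed

lemma successful_iteration_decrease:
  assumes "0 < eps" and large: "\<And>j. j \<le> k \<Longrightarrow> eps \<le> (1 / nu j) * norm (scp j)"
    and success: "ereal eta1h \<le> rho k"
  shows "objective (x (Suc k)) \<le> objective (x k) - (1/2) * eta1 * (1 - theta1) * nu_min * eps ^ 2"
proof -
  have scp_nonzero: "scp j \<noteq> 0" if "j \<le> k" for j
    using large[OF that] \<open>0 < eps\<close> by auto
  have "nu_min \<le> nu k"
    using sigma_le_sigma_max[of k] scp_nonzero by (intro nu_min_le_nu) simp
  then have "nu_min * eps ^ 2 \<le> nu k * ((1 / nu k) * norm (scp k)) ^ 2"
    using large[of k] \<open>0 < eps\<close> nu_min_pos by (intro mult_mono power_mono) auto
  also have "\<dots> = (1 / nu k) * norm (scp k) ^ 2"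
    using nu_pos[of k] by (simp add: power2_eq_square)
  finally have "(1 - theta1) / 2 * (nu_min * eps ^ 2) \<le> (1 - theta1) / 2 * ((1 / nu k) * norm (scp k) ^ 2)"
    using thetas by (intro mult_left_mono) auto
  also have "\<dots> \<le> model_decrease k"
    using model_decrease_ge[of k] by (simp add: mult.assoc)
  finally have "(1/2) * eta1 * (1 - theta1) * nu_min * eps ^ 2 \<le> eta1 * model_decrease k"
    using mult_left_mono[of _ _ eta1] eta1_pos by (simp add: mult_ac)
  then show ?thesis
    using successful_decrease[of k] scp_nonzero success x_update[of k] by simp
qed

lemma successful_iterations_bound:
  assumes "0 < eps" and "\<And>k. k < n \<Longrightarrow> eps \<le> (1 / nu k) * norm (scp k)"
  shows "real (card {k. ereal eta1h \<le> rho k \<and> k < n}) \<le> omega_s / eps ^ 2"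
proof -
  define delta where "delta = (1/2) * eta1 * (1 - theta1) * nu_min * eps ^ 2"
  have "delta > 0"
    unfolding delta_def using eta1_pos thetas nu_min_pos \<open>0 < eps\<close> by simp
  have "objective (x n) \<le> objective (x 0) - delta * card {k. ereal eta1h \<le> rho k \<and> k < n}"
    using successful_iteration_decrease assms x_update unfolding delta_def
    by (intro decrease_by_count) auto
  then have "delta * card {k. ereal eta1h \<le> rho k \<and> k < n} \<le> objective (x 0) - fh_low"
    using objective_ge_low[of n] by linarith
  then show ?thesis
    using \<open>delta > 0\<close> unfolding omega_s_def delta_def by (simp add: field_simps)
qed

lemma unsuccessful_iterations_bound:
  assumes "\<And>k. k < n \<Longrightarrow> scp k \<noteq> 0"
  shows "real (card {k. rho k < ereal eta1h \<and> k < n})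
           \<le> log gamma1 (sigma_max / sigma 0)
              + real (card {k. ereal eta1h \<le> rho k \<and> k < n}) * \<bar>log gamma1 gamma3\<bar>"
proof (rule exponent_le_log)
  have "sigma n \<le> sigma_max"
    using assms by (rule sigma_le_sigma_max)
  moreover have "sigma 0 * gamma3 ^ card {k. ereal eta1h \<le> rho k \<and> k < n}
          * gamma1 ^ card {k. \<not> ereal eta1h \<le> rho k \<and> k < n} \<le> sigma n"
    using gammas sigma_Suc_success sigma_Suc_failure by (intro growth_by_count) (auto simp: not_le)
  ultimately show "sigma 0 * gamma1 ^ card {k. rho k < ereal eta1h \<and> k < n}
                     * gamma3 ^ card {k. ereal eta1h \<le> rho k \<and> k < n} \<le> sigma_max"
    by (simp add: not_le mult_ac)
qed (use gammas sigma_pos in auto)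

theorem iterations_before_criticality:
  assumes "0 < eps" and "\<And>k. k < n \<Longrightarrow> eps \<le> (1 / nu k) * norm (scp k)"
  shows "real n \<le> (1 + \<bar>log gamma1 gamma3\<bar>) * omega_s / eps ^ 2 + log gamma1 (sigma_max / sigma 0)"
proof -
  let ?S = "card {k. ereal eta1h \<le> rho k \<and> k < n}" and ?U = "card {k. rho k < ereal eta1h \<and> k < n}"
  have "n = ?S + ?U"
    using card_Collect_less_partition[of "\<lambda>k. ereal eta1h \<le> rho k" n] by (simp add: not_le)
  moreover have "real ?U \<le> log gamma1 (sigma_max / sigma 0) + real ?S * \<bar>log gamma1 gamma3\<bar>"
    using assms by (intro unsuccessful_iterations_bound) fastforce
  moreover have "real ?S * (1 + \<bar>log gamma1 gamma3\<bar>) \<le> omega_s / eps ^ 2 * (1 + \<bar>log gamma1 gamma3\<bar>)"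
    using successful_iterations_bound[OF assms] by (intro mult_right_mono) auto
  ultimately show ?thesis by (simp add: algebra_simps)
qed

corollary criticality_reached:
  assumes "0 < eps"
  shows "\<exists>k. (1 / nu k) * norm (scp k) < eps"
proof (rule ccontr)
  define bound where
    "bound = (1 + \<bar>log gamma1 gamma3\<bar>) * omega_s / eps ^ 2 + log gamma1 (sigma_max / sigma 0)"
  assume "\<not> ?thesis"
  then have "real (nat \<lceil>bound\<rceil> + 1) \<le> bound"
    unfolding bound_def using assms by (intro iterations_before_criticality) (auto simp: not_less)
  then show False by linarith
qed

end

theorem theorem3p7:
  fixes f :: "real^'n \<Rightarrow> real" and gradf :: "real^'n \<Rightarrow> real^'n"
    and h :: "real^'n \<Rightarrow> ereal"
    and psi :: "real^'n \<Rightarrow> real^'n \<Rightarrow> ereal"  \<comment> \<open>psi x s = \<psi>(s;x)\<close>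
    and lam :: real
    and B :: "real^'n \<Rightarrow> real^'n^'n"
    and kappa_f kappa_g kappa_B kappa_h L fh_low :: real
    and gamma1 gamma2 gamma3 eta1h eta2h theta1 theta2 sigma_min :: real
    and x :: "nat \<Rightarrow> real^'n" and sigma :: "nat \<Rightarrow> real" and nu :: "nat \<Rightarrow> real"
    and fx fxs :: "nat \<Rightarrow> real"   \<comment> \<open>\<hat>f(x_k) and \<hat>f(x_k+s_k) used at iteration k\<close>
    and g :: "nat \<Rightarrow> real^'n"     \<comment> \<open>\<hat>\<nabla>f(x_k) used at iteration k\<close>
    and scp s :: "nat \<Rightarrow> real^'n"
    and xi_cp :: "nat \<Rightarrow> ereal" and rho :: "nat \<Rightarrow> ereal"
    and eps :: real
  assumes
    \<comment> \<open>standing assumptions on f, h, psi\<close>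
    f_grad: "\<And>y. (f has_derivative (\<lambda>v. gradf y \<bullet> v)) (at y)"
    and gradf_cont: "continuous_on UNIV gradf"
    and h_proper: "proper_fun h" and h_lsc: "lsc_fun h"
    and psi_proper: "\<And>y. proper_fun (psi y)" and psi_lsc: "\<And>y. lsc_fun (psi y)"
    and psi_zero: "\<And>y. psi y 0 = h y"
    and psi_subdiff: "\<And>y. limiting_subdiff (psi y) 0 \<subseteq> limiting_subdiff h y"
    and lam_pos: "lam > 0"
    and prox_bdd: "\<And>y lam'. 0 < lam' \<Longrightarrow> lam' < lam \<Longrightarrow>
                      \<exists>c::real. \<forall>w. ereal c \<le> psi y w + ereal (norm w ^ 2 / (2 * lam'))"
    and B_sym: "\<And>y. transpose (B y) = B y"
    \<comment> \<open>constants of the algorithm\<close>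
    and kappa_f_pos: "kappa_f > 0" and kappa_g_pos: "kappa_g > 0"
    and gammas: "0 < gamma3" "gamma3 \<le> 1" "1 < gamma1" "gamma1 \<le> gamma2"
    and etas: "0 < eta1h" "eta1h \<le> eta2h" "eta2h < 1"
    and thetas: "0 < theta1" "theta1 < 1" "1 < theta2"
    and sigma_min_large: "sigma_min > 4 * kappa_f * theta1 * theta2 ^ 2 / (eta1h * (1 - theta1))"
    and sigma0: "sigma 0 \<ge> sigma_min"
    \<comment> \<open>the iterations of iR2N\<close>
    and nu_def: "\<And>k. nu k = theta1 / (spec_norm (B (x k)) + sigma k)"
    and cp_decrease: "\<And>k. ereal (phi_cp (fx k) (g k) (scp k) + (1/2) * (1 / nu k) * norm (scp k) ^ 2)
                            + psi (x k) (scp k)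
                          \<le> ereal (phi_cp (fx k) (g k) 0 + (1/2) * (1 / nu k) * norm (0::real^'n) ^ 2)
                            + psi (x k) 0"
    and xi_cp_def: "\<And>k. xi_cp k = (ereal (phi_cp (fx k) (g k) 0) + psi (x k) 0)
                                 - (ereal (phi_cp (fx k) (g k) (scp k)) + psi (x k) (scp k))"
    and step: "\<And>k. \<exists>t. ereal (phi_q (fx k) (g k) (B (x k)) t + (1/2) * sigma k * norm t ^ 2) + psi (x k) t
                         \<le> ereal (phi_q (fx k) (g k) (B (x k)) (scp k) + (1/2) * sigma k * norm (scp k) ^ 2)
                            + psi (x k) (scp k)
                     \<and> s k = (if norm t > theta2 * norm (scp k) then scp k else t)"
    and rho_def: "\<And>k. rho k =
          ((ereal (fx k) + h (x k)) - (ereal (fxs k) + h (x k + s k)))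
          / ((ereal (phi_q (fx k) (g k) (B (x k)) 0) + psi (x k) 0)
             - (ereal (phi_q (fx k) (g k) (B (x k)) (s k)) + psi (x k) (s k)))"
    and x_update: "\<And>k. x (Suc k) = (if rho k \<ge> ereal eta1h then x k + s k else x k)"
    and sigma_update: "\<And>k. \<exists>sig. (rho k \<ge> ereal eta2h \<longrightarrow> gamma3 * sigma k \<le> sig \<and> sig \<le> sigma k)
              \<and> (ereal eta1h \<le> rho k \<and> rho k < ereal eta2h \<longrightarrow> sigma k \<le> sig \<and> sig \<le> gamma1 * sigma k)
              \<and> (rho k < ereal eta1h \<longrightarrow> gamma1 * sigma k \<le> sig \<and> sig \<le> gamma2 * sigma k)
              \<and> sigma (Suc k) = max sig sigma_min"
    \<comment> \<open>x_0 lies in the domain of h\<close>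
    and x0_dom: "h (x 0) \<noteq> \<infinity>"
    \<comment> \<open>(A1)\<close>
    and A1: "L \<ge> 0" "\<And>y t. \<bar>f (y + t) - f y - gradf y \<bullet> t\<bar> \<le> (1/2) * L * norm t ^ 2"
    \<comment> \<open>(A2)\<close>
    and A2: "kappa_B > 0" "\<And>k. spec_norm (B (x k)) \<le> kappa_B"
    \<comment> \<open>(A3)\<close>
    and A3: "kappa_h > 0"
        "\<And>y t. psi y t \<le> h (y + t) + ereal (kappa_h * norm t ^ 2)"
        "\<And>y t. h (y + t) \<le> psi y t + ereal (kappa_h * norm t ^ 2)"
    \<comment> \<open>(A4)\<close>
    and A4: "\<And>k. (ereal (phi_q (fx k) (g k) (B (x k)) 0) + psi (x k) 0)
                  - (ereal (phi_q (fx k) (g k) (B (x k)) (s k)) + psi (x k) (s k))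
                \<ge> ereal (1 - theta1) * xi_cp k"
    \<comment> \<open>(A6)\<close>
    and A6: "\<And>k. \<bar>f (x k) - fx k\<bar> \<le> kappa_f * norm (s k) ^ 2"
        "\<And>k. \<bar>f (x k + s k) - fxs k\<bar> \<le> kappa_f * norm (s k) ^ 2"
        "\<And>k. norm (gradf (x k) - g k) \<le> kappa_g * norm (s k)"
    \<comment> \<open>(A7)\<close>
    and A7: "\<And>y. ereal (f y) + h y \<ge> ereal fh_low"
    and eps_pos: "eps > 0"
  shows
    "let eta1 = eta1h - 4 * kappa_f * theta1 * theta2 ^ 2 / ((1 - theta1) * sigma_min);
         sigma_succ = max (theta1 * theta2 ^ 2 * (L + kappa_B + 2 * kappa_h + 4 * kappa_f + 2 * kappa_g)
                            / ((1 - theta1) * (1 - eta2h))) (1 / lam);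
         sigma_max = max (sigma 0) (gamma2 * sigma_succ);
         nu_min = theta1 / (kappa_B + sigma_max);
         omega_s = (f (x 0) + real_of_ereal (h (x 0)) - fh_low) / ((1/2) * eta1 * (1 - theta1) * nu_min);
         k_eps = (LEAST k. (1 / nu k) * norm (scp k) < eps);
         S = {k. rho k \<ge> ereal eta1h \<and> k < k_eps};
         U = {k. rho k < ereal eta1h \<and> k < k_eps}
     in (\<exists>k. (1 / nu k) * norm (scp k) < eps) \<and>
        real (card S) + real (card U)
          \<le> (1 + \<bar>log gamma1 gamma3\<bar>) * omega_s / eps ^ 2 + log gamma1 (sigma_max / sigma 0)"
proof -
  define sigma_succ where
    "sigma_succ = max (theta1 * theta2 ^ 2 * (L + kappa_B + 2 * kappa_h + 4 * kappa_f + 2 * kappa_g)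
                        / ((1 - theta1) * (1 - eta2h))) (1 / lam)"
  interpret iR2N f gradf h psi B kappa_f kappa_g kappa_B kappa_h L fh_low
      gamma1 gamma2 gamma3 eta1h eta2h theta1 theta2 sigma_min sigma_succ
      x sigma nu fx fxs g scp s xi_cp rho
    by (unfold_locales; (rule assms)?) (simp add: sigma_succ_def)
  define k_eps where "k_eps = (LEAST k. (1 / nu k) * norm (scp k) < eps)"
  let ?S = "{k. ereal eta1h \<le> rho k \<and> k < k_eps}" and ?U = "{k. rho k < ereal eta1h \<and> k < k_eps}"
  have reached: "\<exists>k. (1 / nu k) * norm (scp k) < eps"
    using eps_pos by (rule criticality_reached)
  have "\<And>k. k < k_eps \<Longrightarrow> eps \<le> (1 / nu k) * norm (scp k)"
    unfolding k_eps_def using not_less_Least not_less by blast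
  then have "real k_eps \<le> (1 + \<bar>log gamma1 gamma3\<bar>) * omega_s / eps ^ 2 + log gamma1 (sigma_max / sigma 0)"
    by (rule iterations_before_criticality[OF eps_pos])
  moreover have "real (card ?S) + real (card ?U) = real k_eps"
    using card_Collect_less_partition[of "\<lambda>k. ereal eta1h \<le> rho k" k_eps]
    by (simp add: not_le flip: of_nat_add)
  ultimately have "real (card ?S) + real (card ?U)
      \<le> (1 + \<bar>log gamma1 gamma3\<bar>) * omega_s / eps ^ 2 + log gamma1 (sigma_max / sigma 0)"
    by linarith
  with reached show ?thesis
    unfolding Let_def k_eps_def omega_s_def objective_def nu_min_def sigma_max_def eta1_def
    unfolding sigma_succ_def by blast
qed

end
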